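(* Let $H$ be a multi-hypergraph, $\mathcal{M}$ a matroid and $\gamma\colon E(H)\to E(\mathcal{M})$. Let $M$ be a maximal independent matching in $(H,\gamma)$ of size $\ell$, and suppose there exists $e\in E(H)$ with $\gamma(e)\notin\mathrm{span}(\gamma(M))$. Then there exist an integer $k>0$ and a collection $X\subseteq E(H)$ of $k+1$ hyperedges such that the subhypergraph of $H$ formed by the hyperedges in $X$ and their vertices is connected, and $H-V(X)$ (with the labelling $\gamma$ restricted to its hyperedges) contains a maximal independent matching of size $\ell-k$.
   Context: A multi-hypergraph $H=(V,E)$ consists of a finite set $V$ and a multiset $E$ of non-empty subsets of $V$ (hyperedges); distinct copies of the same subset are distinct hyperedges and may receive different labels. For $U\subseteq V(H)$, $H-U$ has vertex set $V(H)\setminus U$ and all hyperedges of $H$ disjoint from $U$. For $X\subseteq E(H)$, $V(X)=\bigcup_{e\in X}e$. A multi-hypergraph is connected if for every partition of its vertex set into non-empty parts $A,B$ some hyperedge meets both $A$ and $B$. $\mathrm{span}$ denotes the closure operator of the matroid $\mathcal{M}$. Given $\gamma\colon E(H)\to E(\mathcal{M})$, an independent matching in $(H,\gamma)$ is a collection $M$ of pairwise vertex-disjoint hyperedges of $H$ with pairwise distinct labels such that $\gamma(M)$ is an independent set of $\mathcal{M}$ (the empty collection is an independent matching). An independent matching $M$ is inclusion-wise maximal if no independent matching $M'$ satisfies $M\subsetneq M'$. It is maximal if there is no independent matching $M'$ in $(H,\gamma)$ with $\mathrm{span}(\gamma(M'))=\mathrm{span}(\gamma(M))$ that is not inclusion-wise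 maximal. *)

theory Defs
  imports Main
begin

definition matroid :: "'m set \<Rightarrow> ('m set \<Rightarrow> bool) \<Rightarrow> bool" where
  "matroid G indep \<longleftrightarrow> finite G \<and> (\<forall>I. indep I \<longrightarrow> I \<subseteq> G) \<and> indep {} \<and>
     (\<forall>I J. indep J \<and> I \<subseteq> J \<longrightarrow> indep I) \<and>
     (\<forall>I J. indep I \<and> indep J \<and> card I < card J \<longrightarrow> (\<exists>x\<in>J - I. indep (insert x I)))"

definition span :: "'m set \<Rightarrow> ('m set \<Rightarrow> bool) \<Rightarrow> 'm set \<Rightarrow> 'm set" where
  "span G indep A = {x \<in> G. x \<in> A \<or> (\<exists>I\<subseteq>A. indep I \<and> \<not> indep (insert x I))}"

text \<open>Distinct identifiers with equal incidence sets model parallel copies.\<close>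
definition multi_hypergraph :: "'v set \<Rightarrow> 'e set \<Rightarrow> ('e \<Rightarrow> 'v set) \<Rightarrow> bool" where
  "multi_hypergraph V E inc \<longleftrightarrow> finite V \<and> finite E \<and> (\<forall>e\<in>E. inc e \<noteq> {} \<and> inc e \<subseteq> V)"

definition Vof :: "('e \<Rightarrow> 'v set) \<Rightarrow> 'e set \<Rightarrow> 'v set" where
  "Vof inc X = \<Union>(inc ` X)"

definition hdel_edges :: "'e set \<Rightarrow> ('e \<Rightarrow> 'v set) \<Rightarrow> 'v set \<Rightarrow> 'e set" where
  "hdel_edges E inc U = {e \<in> E. inc e \<inter> U = {}}"

definition hconnected :: "'v set \<Rightarrow> 'e set \<Rightarrow> ('e \<Rightarrow> 'v set) \<Rightarrow> bool" where
  "hconnected Vs X inc \<longleftrightarrow>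
     (\<forall>A B. A \<noteq> {} \<and> B \<noteq> {} \<and> A \<inter> B = {} \<and> A \<union> B = Vs \<longrightarrow>
        (\<exists>e\<in>X. inc e \<inter> A \<noteq> {} \<and> inc e \<inter> B \<noteq> {}))"

definition indep_matching ::
  "'e set \<Rightarrow> ('e \<Rightarrow> 'v set) \<Rightarrow> ('e \<Rightarrow> 'm) \<Rightarrow> ('m set \<Rightarrow> bool) \<Rightarrow> 'e set \<Rightarrow> bool" where
  "indep_matching E inc \<gamma> indep M \<longleftrightarrow>
     M \<subseteq> E \<and> (\<forall>e\<in>M. \<forall>f\<in>M. e \<noteq> f \<longrightarrow> inc e \<inter> inc f = {}) \<and>
     inj_on \<gamma> M \<and> indep (\<gamma> ` M)"

definition incl_max_indep_matching ::
  "'e set \<Rightarrow> ('e \<Rightarrow> 'v set) \<Rightarrow> ('e \<Rightarrow> 'm) \<Rightarrow> ('m set \<Rightarrow> bool) \<Rightarrow> 'e set \<Rightarrow> bool" where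
  "incl_max_indep_matching E inc \<gamma> indep M \<longleftrightarrow>
     indep_matching E inc \<gamma> indep M \<and>
     \<not> (\<exists>M'. indep_matching E inc \<gamma> indep M' \<and> M \<subset> M')"

definition max_indep_matching ::
  "'e set \<Rightarrow> ('e \<Rightarrow> 'v set) \<Rightarrow> ('e \<Rightarrow> 'm) \<Rightarrow> 'm set \<Rightarrow> ('m set \<Rightarrow> bool) \<Rightarrow> 'e set \<Rightarrow> bool" where
  "max_indep_matching E inc \<gamma> G indep M \<longleftrightarrow>
     indep_matching E inc \<gamma> indep M \<and>
     \<not> (\<exists>M'. indep_matching E inc \<gamma> indep M' \<and>
             span G indep (\<gamma> ` M') = span G indep (\<gamma> ` M) \<and>
             \<not> incl_max_indep_matching E inc \<gamma> indep M')"

end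

theory Submission
  imports Defs "HOL-Library.Disjoint_Sets"
begin

text \<open>Every independent matching N with the same span as M is again maximal, since maximality
  depends only on the span. Choose such an N for which the set D of hyperedges of N meeting e
  is as small as possible. D is non-empty, for otherwise N + e would be a larger independent
  matching, and X = D + e is connected, being a star around e. If N - D were not maximal in
  H - V(X), some independent matching M' of H - V(X) spanning the same flat as N - D could be
  extended by a hyperedge f. Augmenting the labels of M' (of M' + f if the label of f is
  spanned by N) from those of N can only use labels of D, because the labels of N - D are
  already spanned. This gives an independent matching with the span of N which either can be
  extended by f or meets e in fewer than |D| hyperedges, a contradiction either way.\<close>

lemma subset_span: "A \<subseteq> G \<Longrightarrow> A \<subseteq> span G indep A"
  unfolding span_def by blast

lemma span_mono: "A \<subseteq> B \<Longrightarrow> span G indep A \<subseteq> span G indep B"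
  unfolding span_def by blast

lemma span_subset_ground: "span G indep A \<subseteq> G"
  unfolding span_def by blast

lemma indep_insert_notin_span: "x \<in> G \<Longrightarrow> x \<notin> span G indep A \<Longrightarrow> indep A \<Longrightarrow> indep (insert x A)"
  unfolding span_def by blast

locale fin_matroid =
  fixes G :: "'m set" and indep :: "'m set \<Rightarrow> bool"
  assumes matroid: "matroid G indep"
begin

lemma finite_ground: "finite G"
  using matroid unfolding matroid_def by (elim conjE)

lemma indep_subset_ground: "indep I \<Longrightarrow> I \<subseteq> G"
  using matroid unfolding matroid_def by (elim conjE) blast

lemma indep_finite: "indep I \<Longrightarrow> finite I"
  using finite_subset[OF indep_subset_ground finite_ground] .

lemma indep_subset: "indep J \<Longrightarrow> I \<subseteq> J \<Longrightarrow> indep I"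
  using matroid unfolding matroid_def by (elim conjE) blast

lemma indep_augment:
  "indep I \<Longrightarrow> indep J \<Longrightarrow> card I < card J \<Longrightarrow> \<exists>x\<in>J - I. indep (insert x I)"
  using matroid unfolding matroid_def by (elim conjE) blast

lemma notin_span_of_indep:
  assumes "indep K" "I \<subseteq> K" "x \<in> K - I"
  shows "x \<notin> span G indep I"
proof
  assume "x \<in> span G indep I"
  then obtain I' where "I' \<subseteq> I" "\<not> indep (insert x I')"
    using assms(3) unfolding span_def by blast
  moreover have "insert x I' \<subseteq> K"
    using \<open>I' \<subseteq> I\<close> assms(2,3) by blast
  ultimately show False
    using indep_subset[OF assms(1)] by blast
qed

lemma card_le_of_subset_span:
  assumes "indep A" "indep J" "A \<subseteq> span G indep J"
  shows "card A \<le> card J"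
proof (rule ccontr)
  assume "\<not> card A \<le> card J"
  then obtain x where "x \<in> A - J" "indep (insert x J)"
    using indep_augment[OF assms(2,1)] by auto
  then show False
    using notin_span_of_indep[of "insert x J" J x] assms(3) by blast
qed

lemma card_eq_of_span_eq:
  assumes "indep A" "indep B" "span G indep A = span G indep B"
  shows "card A = card B"
proof (rule antisym)
  show "card A \<le> card B"
    using card_le_of_subset_span[OF assms(1,2)] subset_span[OF indep_subset_ground[OF assms(1)]]
      assms(3) by blast
  show "card B \<le> card A"
    using card_le_of_subset_span[OF assms(2,1)] subset_span[OF indep_subset_ground[OF assms(2)]]
      assms(3) by blast
qed

lemma span_subset_of_subset_span:
  assumes I: "indep I" and J: "indep J" and "card J \<le> card I" and I_J: "I \<subseteq> span G indep J"
  shows "span G indep J \<subseteq> span G indep I"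
proof
  fix x assume x: "x \<in> span G indep J"
  show "x \<in> span G indep I"
  proof (rule ccontr)
    assume x_I: "x \<notin> span G indep I"
    have "x \<in> G"
      using x span_subset_ground[of G indep J] by blast
    have "card (insert x I) \<le> card J"
      using card_le_of_subset_span[OF indep_insert_notin_span[OF \<open>x \<in> G\<close> x_I I] J] I_J x by blast
    moreover have "x \<notin> I"
      using x_I subset_span[OF indep_subset_ground[OF I]] by blast
    ultimately show False
      using \<open>card J \<le> card I\<close> indep_finite[OF I] by simp
  qed
qed

lemma span_eq_of_subset_span:
  assumes I: "indep I" and J: "indep J" and "card I = card J" and "I \<subseteq> span G indep J"
  shows "span G indep I = span G indep J"
proof
  show J_I: "span G indep J \<subseteq> span G indep I"
    using span_subset_of_subset_span assms by simp
  then have "J \<subseteq> span G indep I"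
    using subset_span[OF indep_subset_ground[OF J]] by blast
  then show "span G indep I \<subseteq> span G indep J"
    using span_subset_of_subset_span[OF J I] \<open>card I = card J\<close> by simp
qed

lemma indep_augment_to_card:
  "indep I \<Longrightarrow> indep J \<Longrightarrow> card I \<le> card J \<Longrightarrow>
    \<exists>Z\<subseteq>J - I. indep (I \<union> Z) \<and> card (I \<union> Z) = card J"
proof (induction "card J - card I" arbitrary: I)
  case 0
  then show ?case by (intro exI[of _ "{}"]) auto
next
  case (Suc n)
  then have "card I < card J" by linarith
  then obtain x where x: "x \<in> J - I" "indep (insert x I)"
    using indep_augment Suc.prems by blast
  have "card (insert x I) = Suc (card I)"
    using x indep_finite[OF Suc.prems(1)] by simp
  then have "n = card J - card (insert x I)" "card (insert x I) \<le> card J"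
    using Suc.hyps(2) by linarith+
  then obtain Z where Z: "Z \<subseteq> J - insert x I" "indep (insert x I \<union> Z)"
      "card (insert x I \<union> Z) = card J"
    using Suc.hyps(1) x(2) Suc.prems(2) by blast
  moreover have "I \<union> insert x Z = insert x I \<union> Z"
    by blast
  ultimately have "indep (I \<union> insert x Z)" "card (I \<union> insert x Z) = card J"
    by simp_all
  moreover have "insert x Z \<subseteq> J - I"
    using Z(1) x(1) by blast
  ultimately show ?case
    by blast
qed

lemma indep_augment_within:
  assumes I: "indep I" and J: "indep J" and "I \<subseteq> span G indep J"
    and J_A: "J - A \<subseteq> span G indep I"
  obtains Z where "Z \<subseteq> A - I" "indep (I \<union> Z)" "card (I \<union> Z) = card J"
proof -
  obtain Z where Z: "Z \<subseteq> J - I" "indep (I \<union> Z)" "card (I \<union> Z) = card J"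
    using indep_augment_to_card[OF I J card_le_of_subset_span[OF I J]] assms(3) by blast
  have "z \<in> A" if "z \<in> Z" for z
    using notin_span_of_indep[OF Z(2), of I z] J_A Z(1) that by blast
  then show thesis
    using that Z by blast
qed

end

lemma disjoint_family_on_Un:
  assumes "disjoint_family_on A I" "disjoint_family_on A J" "\<forall>i\<in>I. \<forall>j\<in>J. A i \<inter> A j = {}"
  shows "disjoint_family_on A (I \<union> J)"
  using assms unfolding disjoint_family_on_def by blast

lemma indep_matching_iff:
  "indep_matching E inc \<gamma> indep M \<longleftrightarrow>
    M \<subseteq> E \<and> disjoint_family_on inc M \<and> inj_on \<gamma> M \<and> indep (\<gamma> ` M)"
  unfolding indep_matching_def disjoint_family_on_def by blast

lemma card_image_indep_matching:
  "indep_matching E inc \<gamma> indep N \<Longrightarrow> card (\<gamma> ` N) = card N"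
  unfolding indep_matching_def by (blast intro: card_image)

lemma indep_matching_Un:
  assumes P: "indep_matching E inc \<gamma> indep P" and Q: "indep_matching E inc \<gamma> indep Q"
    and "\<forall>p\<in>P. \<forall>q\<in>Q. inc p \<inter> inc q = {}" and "\<gamma> ` P \<inter> \<gamma> ` Q = {}"
    and "indep (\<gamma> ` P \<union> \<gamma> ` Q)"
  shows "indep_matching E inc \<gamma> indep (P \<union> Q)"
proof -
  have "disjoint_family_on inc (P \<union> Q)"
    using disjoint_family_on_Un P Q assms(3) unfolding indep_matching_iff by blast
  moreover have "inj_on \<gamma> (P \<union> Q)"
    using P Q assms(4) unfolding indep_matching_def inj_on_Un by blast
  ultimately show ?thesis
    using P Q assms(5) unfolding indep_matching_iff by (simp add: image_Un)
qed

lemma indep_matching_mono: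
  "E \<subseteq> E' \<Longrightarrow> indep_matching E inc \<gamma> indep M \<Longrightarrow> indep_matching E' inc \<gamma> indep M"
  unfolding indep_matching_def by blast

lemma hdel_edges_subset: "hdel_edges E inc U \<subseteq> E"
  unfolding hdel_edges_def by blast

lemma max_indep_matching_imp_incl_max:
  "max_indep_matching E inc \<gamma> G indep M \<Longrightarrow> incl_max_indep_matching E inc \<gamma> indep M"
  unfolding max_indep_matching_def by blast

lemma max_indep_matching_of_span_eq:
  assumes "max_indep_matching E inc \<gamma> G indep M" "indep_matching E inc \<gamma> indep N"
    and "span G indep (\<gamma> ` N) = span G indep (\<gamma> ` M)"
  shows "max_indep_matching E inc \<gamma> G indep N"
  using assms unfolding max_indep_matching_def by metis

definition edges_meeting :: "('e \<Rightarrow> 'v set) \<Rightarrow> 'e set \<Rightarrow> 'e \<Rightarrow> 'e set" where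
  "edges_meeting inc N e = {g \<in> N. inc g \<inter> inc e \<noteq> {}}"

lemma hconnected_star:
  assumes "\<forall>d\<in>D. inc d \<inter> inc e \<noteq> {}"
  shows "hconnected (Vof inc (insert e D)) (insert e D) inc"
  unfolding hconnected_def
proof (intro allI impI)
  fix A B assume AB: "A \<noteq> {} \<and> B \<noteq> {} \<and> A \<inter> B = {} \<and> A \<union> B = Vof inc (insert e D)"
  have crossing: "\<exists>f\<in>insert e D. inc f \<inter> A' \<noteq> {} \<and> inc f \<inter> B' \<noteq> {}"
    if v: "inc e \<subseteq> A'" "v \<in> B'" "v \<notin> A'" "v \<in> Vof inc (insert e D)" for A' B' v
  proof -
    obtain d where "d \<in> D" "v \<in> inc d"
      using v unfolding Vof_def by blast
    then show ?thesis
      using assms v by blast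
  qed
  have "inc e \<subseteq> A \<union> B"
    using AB unfolding Vof_def by blast
  then consider "inc e \<inter> A \<noteq> {} \<and> inc e \<inter> B \<noteq> {}" | "inc e \<subseteq> A" | "inc e \<subseteq> B"
    by blast
  then show "\<exists>f\<in>insert e D. inc f \<inter> A \<noteq> {} \<and> inc f \<inter> B \<noteq> {}"
  proof cases
    case 1
    then show ?thesis by blast
  next
    case 2
    obtain v where "v \<in> B" "v \<notin> A" "v \<in> Vof inc (insert e D)"
      using AB by blast
    then show ?thesis
      using crossing[OF 2] by blast
  next
    case 3
    obtain v where "v \<in> A" "v \<notin> B" "v \<in> Vof inc (insert e D)"
      using AB by blast
    then have "\<exists>f\<in>insert e D. inc f \<inter> B \<noteq> {} \<and> inc f \<inter> A \<noteq> {}"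
      using crossing[OF 3] by blast
    then show ?thesis
      by blast
  qed
qed

locale matroid_labelled_hypergraph = fin_matroid G indep
  for G :: "'m set" and indep :: "'m set \<Rightarrow> bool" +
  fixes V :: "'v set" and E :: "'e set" and inc :: "'e \<Rightarrow> 'v set" and \<gamma> :: "'e \<Rightarrow> 'm"
  assumes hypergraph: "multi_hypergraph V E inc"
    and labels_in_ground: "\<forall>f\<in>E. \<gamma> f \<in> G"
begin

lemma finite_edges: "finite E"
  using hypergraph unfolding multi_hypergraph_def by blast

lemma edge_nonempty: "f \<in> E \<Longrightarrow> inc f \<noteq> {}"
  using hypergraph unfolding multi_hypergraph_def by blast

lemma indep_matching_subset:
  assumes "indep_matching E' inc \<gamma> indep M" "A \<subseteq> M"
  shows "indep_matching E' inc \<gamma> indep A"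
proof -
  have "indep (\<gamma> ` A)"
    using assms indep_subset[of "\<gamma> ` M" "\<gamma> ` A"] unfolding indep_matching_def by blast
  then show ?thesis
    using assms inj_on_subset[of \<gamma> M A] unfolding indep_matching_def by blast
qed

lemma card_eq_of_matching_span_eq:
  assumes "indep_matching E1 inc \<gamma> indep N1" "indep_matching E2 inc \<gamma> indep N2"
    and "span G indep (\<gamma> ` N1) = span G indep (\<gamma> ` N2)"
  shows "card N1 = card N2"
  using card_eq_of_span_eq[OF _ _ assms(3)] card_image_indep_matching[OF assms(1)]
    card_image_indep_matching[OF assms(2)] assms(1,2)
  unfolding indep_matching_def by simp

lemma indep_matching_insert:
  assumes N: "indep_matching E' inc \<gamma> indep N" and "E' \<subseteq> E" "f \<in> E'"
    and disjoint: "\<forall>g\<in>N. inc f \<inter> inc g = {}"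
    and f_span: "\<gamma> f \<notin> span G indep (\<gamma> ` N)"
  shows "f \<notin> N" "indep_matching E' inc \<gamma> indep (insert f N)"
proof -
  show "f \<notin> N"
    using disjoint edge_nonempty \<open>E' \<subseteq> E\<close> \<open>f \<in> E'\<close> by blast
  moreover have "\<gamma> f \<notin> \<gamma> ` N"
    using f_span subset_span[OF indep_subset_ground] N unfolding indep_matching_def by blast
  moreover have "indep (insert (\<gamma> f) (\<gamma> ` N))"
    using indep_insert_notin_span[OF _ f_span] labels_in_ground N assms(2,3)
    unfolding indep_matching_def by blast
  ultimately show "indep_matching E' inc \<gamma> indep (insert f N)"
    using N disjoint \<open>f \<in> E'\<close>
    unfolding indep_matching_iff disjoint_family_on_insert[OF \<open>f \<notin> N\<close>] by auto
qed

text \<open>Augmenting the labels of P from those of N only uses labels of D, because the labels of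
  N - D are already spanned by those of P.\<close>

lemma matching_exchange:
  assumes N: "indep_matching E inc \<gamma> indep N" and "D \<subseteq> N"
    and P: "indep_matching E inc \<gamma> indep P"
    and P_D: "\<forall>p\<in>P. \<forall>d\<in>D. inc p \<inter> inc d = {}"
    and P_span: "\<gamma> ` P \<subseteq> span G indep (\<gamma> ` N)"
    and rest_span: "\<gamma> ` (N - D) \<subseteq> span G indep (\<gamma> ` P)"
  obtains Y where "Y \<subseteq> D" "indep_matching E inc \<gamma> indep (P \<union> Y)"
    "span G indep (\<gamma> ` (P \<union> Y)) = span G indep (\<gamma> ` N)" "card P + card Y = card N"
proof -
  have N_E: "N \<subseteq> E" and indep_N: "indep (\<gamma> ` N)" and P_E: "P \<subseteq> E" and indep_P: "indep (\<gamma> ` P)"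
    using N P unfolding indep_matching_def by auto
  have card_N: "card (\<gamma> ` N) = card N"
    using card_image_indep_matching[OF N] .
  have "\<gamma> ` N - \<gamma> ` D \<subseteq> span G indep (\<gamma> ` P)"
    using rest_span by blast
  then obtain Z where Z: "Z \<subseteq> \<gamma> ` D - \<gamma> ` P" "indep (\<gamma> ` P \<union> Z)" "card (\<gamma> ` P \<union> Z) = card N"
    using indep_augment_within[OF indep_P indep_N P_span] card_N by metis
  define Y where "Y = {d \<in> D. \<gamma> d \<in> Z}"
  have "Y \<subseteq> D"
    unfolding Y_def by blast
  have image_Y: "\<gamma> ` Y = Z"
    using Z(1) unfolding Y_def by blast
  have Y: "indep_matching E inc \<gamma> indep Y"
    using indep_matching_subset[OF N] \<open>Y \<subseteq> D\<close> \<open>D \<subseteq> N\<close> by blast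
  have "\<forall>p\<in>P. \<forall>y\<in>Y. inc p \<inter> inc y = {}"
    using P_D \<open>Y \<subseteq> D\<close> by blast
  moreover have "\<gamma> ` P \<inter> \<gamma> ` Y = {}"
    using Z(1) image_Y by blast
  moreover have "indep (\<gamma> ` P \<union> \<gamma> ` Y)"
    using Z(2) image_Y by simp
  ultimately have matching: "indep_matching E inc \<gamma> indep (P \<union> Y)"
    using indep_matching_Un[OF P Y] by blast
  have image_PY: "\<gamma> ` (P \<union> Y) = \<gamma> ` P \<union> Z"
    using image_Y by (simp add: image_Un)
  have card_image_PY: "card (\<gamma> ` (P \<union> Y)) = card N"
    by (simp only: image_PY Z(3))
  have "finite P"
    using finite_subset[OF P_E finite_edges] .
  have "Y \<subseteq> E"
    using \<open>Y \<subseteq> D\<close> \<open>D \<subseteq> N\<close> N_E by blast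
  then have "finite Y"
    using finite_subset finite_edges by blast
  have "P \<inter> Y = {}"
    using P_D edge_nonempty P_E \<open>Y \<subseteq> D\<close> by blast
  then have "card P + card Y = card (P \<union> Y)"
    using card_Un_disjoint[OF \<open>finite P\<close> \<open>finite Y\<close>] by simp
  also have "\<dots> = card N"
    using card_image_indep_matching[OF matching] card_image_PY by simp
  finally have card_PY: "card P + card Y = card N" .
  have "Z \<subseteq> \<gamma> ` N"
    using Z(1) \<open>D \<subseteq> N\<close> by blast
  then have "\<gamma> ` (P \<union> Y) \<subseteq> span G indep (\<gamma> ` N)"
    using P_span subset_span[OF indep_subset_ground[OF indep_N]] unfolding image_PY by blast
  moreover have "indep (\<gamma> ` (P \<union> Y))"
    using matching unfolding indep_matching_def by blast
  ultimately have "span G indep (\<gamma> ` (P \<union> Y)) = span G indep (\<gamma> ` N)"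
    using span_eq_of_subset_span[OF _ indep_N] card_image_PY card_N by simp
  then show thesis
    using that \<open>Y \<subseteq> D\<close> matching card_PY by blast
qed

lemma not_max_of_extendable_exchange:
  assumes N: "indep_matching E inc \<gamma> indep N" and "D \<subseteq> N"
    and M: "indep_matching E inc \<gamma> indep M"
    and M_D: "\<forall>p\<in>M. \<forall>d\<in>D. inc p \<inter> inc d = {}"
    and M_span: "\<gamma> ` M \<subseteq> span G indep (\<gamma> ` N)"
    and rest_span: "\<gamma> ` (N - D) \<subseteq> span G indep (\<gamma> ` M)"
    and "f \<in> E" and f_disjoint: "\<forall>g\<in>M \<union> D. inc f \<inter> inc g = {}"
    and f_span: "\<gamma> f \<notin> span G indep (\<gamma> ` N)"
  shows "\<not> max_indep_matching E inc \<gamma> G indep N"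
proof
  assume N_max: "max_indep_matching E inc \<gamma> G indep N"
  obtain Y where Y: "Y \<subseteq> D" "indep_matching E inc \<gamma> indep (M \<union> Y)"
    "span G indep (\<gamma> ` (M \<union> Y)) = span G indep (\<gamma> ` N)"
    by (rule matching_exchange[OF N \<open>D \<subseteq> N\<close> M M_D M_span rest_span])
  have "f \<notin> M \<union> Y" "indep_matching E inc \<gamma> indep (insert f (M \<union> Y))"
    using indep_matching_insert[OF Y(2) subset_refl \<open>f \<in> E\<close>] f_disjoint f_span Y(1,3) by auto
  moreover have "incl_max_indep_matching E inc \<gamma> indep (M \<union> Y)"
    using max_indep_matching_imp_incl_max[OF max_indep_matching_of_span_eq[OF N_max Y(2,3)]] .
  ultimately show False
    unfolding incl_max_indep_matching_def by blast
qed

lemma fewer_edges_meeting_of_exchange: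
  fixes e :: 'e
  assumes N: "indep_matching E inc \<gamma> indep N" and "D \<subseteq> N" and "finite D"
    and P: "indep_matching E inc \<gamma> indep P" and "card N < card P + card D"
    and P_e: "\<forall>p\<in>P. inc p \<inter> inc e = {}"
    and P_D: "\<forall>p\<in>P. \<forall>d\<in>D. inc p \<inter> inc d = {}"
    and P_span: "\<gamma> ` P \<subseteq> span G indep (\<gamma> ` N)"
    and rest_span: "\<gamma> ` (N - D) \<subseteq> span G indep (\<gamma> ` P)"
  obtains N' where "indep_matching E inc \<gamma> indep N'"
    "span G indep (\<gamma> ` N') = span G indep (\<gamma> ` N)" "card (edges_meeting inc N' e) < card D"
proof -
  obtain Y where Y: "Y \<subseteq> D" "indep_matching E inc \<gamma> indep (P \<union> Y)"
    "span G indep (\<gamma> ` (P \<union> Y)) = span G indep (\<gamma> ` N)" "card P + card Y = card N"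
    by (rule matching_exchange[OF N \<open>D \<subseteq> N\<close> P P_D P_span rest_span])
  have "edges_meeting inc (P \<union> Y) e \<subseteq> Y"
    using P_e unfolding edges_meeting_def by blast
  then have "card (edges_meeting inc (P \<union> Y) e) \<le> card Y"
    using card_mono finite_subset[OF Y(1) \<open>finite D\<close>] by blast
  also have "\<dots> < card D"
    using Y(4) \<open>card N < card P + card D\<close> by linarith
  finally show thesis
    using that Y(2,3) by blast
qed

lemma card_edges_meeting_pos:
  assumes N: "max_indep_matching E inc \<gamma> G indep N" and "e \<in> E"
    and e_span: "\<gamma> e \<notin> span G indep (\<gamma> ` N)"
  shows "card (edges_meeting inc N e) > 0"
proof (rule ccontr)
  have "finite N"
    using N finite_subset finite_edges unfolding max_indep_matching_def indep_matching_def by blast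
  moreover assume "\<not> card (edges_meeting inc N e) > 0"
  ultimately have "\<forall>g\<in>N. inc e \<inter> inc g = {}"
    unfolding edges_meeting_def by auto
  then have "e \<notin> N" "indep_matching E inc \<gamma> indep (insert e N)"
    using indep_matching_insert[OF _ subset_refl \<open>e \<in> E\<close> _ e_span] N
    unfolding max_indep_matching_def by blast+
  then show False
    using max_indep_matching_imp_incl_max[OF N] unfolding incl_max_indep_matching_def by blast
qed

lemma ex_min_edges_meeting:
  fixes e :: 'e
  assumes "max_indep_matching E inc \<gamma> G indep M"
  obtains N where "max_indep_matching E inc \<gamma> G indep N"
    "span G indep (\<gamma> ` N) = span G indep (\<gamma> ` M)" "card N = card M"
    "\<And>N'. indep_matching E inc \<gamma> indep N' \<Longrightarrow>
      span G indep (\<gamma> ` N') = span G indep (\<gamma> ` N) \<Longrightarrow>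
      card (edges_meeting inc N e) \<le> card (edges_meeting inc N' e)"
proof -
  let ?same_span = "\<lambda>N. indep_matching E inc \<gamma> indep N \<and>
    span G indep (\<gamma> ` N) = span G indep (\<gamma> ` M)"
  obtain N where N: "?same_span N"
    and minimal: "\<And>N'. ?same_span N' \<Longrightarrow> card (edges_meeting inc N e) \<le> card (edges_meeting inc N' e)"
    using ex_has_least_nat[of ?same_span M "\<lambda>N. card (edges_meeting inc N e)"] assms
    unfolding max_indep_matching_def by blast
  moreover have "max_indep_matching E inc \<gamma> G indep N"
    using max_indep_matching_of_span_eq[OF assms] N by blast
  moreover have "card N = card M"
    using card_eq_of_matching_span_eq N assms unfolding max_indep_matching_def by blast
  ultimately show thesis
    using that by simp
qed

lemma indep_matching_outside_star:
  fixes e :: 'e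
  assumes N: "indep_matching E inc \<gamma> indep N"
  defines "D \<equiv> edges_meeting inc N e"
  shows "indep_matching (hdel_edges E inc (Vof inc (insert e D))) inc \<gamma> indep (N - D)"
proof -
  have disj_N: "disjoint_family_on inc N"
    using N unfolding indep_matching_iff by blast
  have "inc g \<inter> Vof inc (insert e D) = {}" if "g \<in> N - D" for g
    using that disjoint_family_onD[OF disj_N] unfolding D_def edges_meeting_def Vof_def by blast
  then have "N - D \<subseteq> hdel_edges E inc (Vof inc (insert e D))"
    using N unfolding hdel_edges_def indep_matching_def by blast
  then show ?thesis
    using indep_matching_subset[OF N, of "N - D"] unfolding indep_matching_def by blast
qed

lemma span_eq_span_Diff:
  assumes N: "indep_matching E inc \<gamma> indep N" and "D \<subseteq> N"
    and M: "indep_matching E' inc \<gamma> indep M" and rest: "indep_matching E' inc \<gamma> indep (N - D)"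
    and M_span: "span G indep (\<gamma> ` M) = span G indep (\<gamma> ` (N - D))"
  shows "card M + card D = card N" "\<gamma> ` (N - D) \<subseteq> span G indep (\<gamma> ` M)"
    "\<gamma> ` M \<subseteq> span G indep (\<gamma> ` N)"
proof -
  have "finite N"
    using N finite_subset finite_edges unfolding indep_matching_def by blast
  have "card M = card (N - D)"
    using card_eq_of_matching_span_eq[OF M rest M_span] .
  also have "\<dots> = card N - card D"
    using card_Diff_subset[OF finite_subset[OF \<open>D \<subseteq> N\<close> \<open>finite N\<close>] \<open>D \<subseteq> N\<close>] .
  finally show "card M + card D = card N"
    using card_mono[OF \<open>finite N\<close> \<open>D \<subseteq> N\<close>] by simp
  have indep_rest: "indep (\<gamma> ` (N - D))" and indep_M: "indep (\<gamma> ` M)"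
    using rest M unfolding indep_matching_def by blast+
  show "\<gamma> ` (N - D) \<subseteq> span G indep (\<gamma> ` M)"
    using subset_span[OF indep_subset_ground[OF indep_rest]] M_span by blast
  have "span G indep (\<gamma> ` M) \<subseteq> span G indep (\<gamma> ` N)"
    using span_mono[of "\<gamma> ` (N - D)" "\<gamma> ` N" G indep] M_span by blast
  then show "\<gamma> ` M \<subseteq> span G indep (\<gamma> ` N)"
    using subset_span[OF indep_subset_ground[OF indep_M]] by blast
qed

lemma incl_max_outside_star:
  fixes e :: 'e
  assumes N_max: "max_indep_matching E inc \<gamma> G indep N" and "e \<in> E"
    and e_span: "\<gamma> e \<notin> span G indep (\<gamma> ` N)"
    and minimal: "\<And>N'. indep_matching E inc \<gamma> indep N' \<Longrightarrow>
      span G indep (\<gamma> ` N') = span G indep (\<gamma> ` N) \<Longrightarrow>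
      card (edges_meeting inc N e) \<le> card (edges_meeting inc N' e)"
  defines "D \<equiv> edges_meeting inc N e"
    and "E' \<equiv> hdel_edges E inc (Vof inc (insert e (edges_meeting inc N e)))"
  assumes M: "indep_matching E' inc \<gamma> indep M"
    and M_span: "span G indep (\<gamma> ` M) = span G indep (\<gamma> ` (N - D))"
  shows "incl_max_indep_matching E' inc \<gamma> indep M"
proof (rule ccontr)
  assume "\<not> incl_max_indep_matching E' inc \<gamma> indep M"
  then obtain M3 where M3: "indep_matching E' inc \<gamma> indep M3" "M \<subset> M3"
    using M unfolding incl_max_indep_matching_def by blast
  then obtain f where "f \<in> M3" "f \<notin> M"
    by blast
  define P where "P = insert f M"
  have N: "indep_matching E inc \<gamma> indep N"
    using N_max unfolding max_indep_matching_def by blast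
  have "D \<subseteq> N"
    unfolding D_def edges_meeting_def by blast
  have "E' \<subseteq> E"
    unfolding E'_def by (rule hdel_edges_subset)
  have P: "indep_matching E' inc \<gamma> indep P"
    using indep_matching_subset[OF M3(1)] M3(2) \<open>f \<in> M3\<close> unfolding P_def by blast
  then have "P \<subseteq> E'"
    unfolding indep_matching_def by blast
  then have P_e: "\<forall>p\<in>P. inc p \<inter> inc e = {}" and P_D: "\<forall>p\<in>P. \<forall>d\<in>D. inc p \<inter> inc d = {}"
    unfolding E'_def D_def hdel_edges_def Vof_def by blast+
  have "D \<subseteq> E"
    using N \<open>D \<subseteq> N\<close> unfolding indep_matching_def by blast
  then have "finite D"
    using finite_subset finite_edges by blast
  have rest: "indep_matching E' inc \<gamma> indep (N - D)"
    using indep_matching_outside_star[OF N] unfolding D_def E'_def .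
  obtain card_M: "card M + card D = card N"
    and rest_span: "\<gamma> ` (N - D) \<subseteq> span G indep (\<gamma> ` M)"
    and M_span_N: "\<gamma> ` M \<subseteq> span G indep (\<gamma> ` N)"
    using span_eq_span_Diff[OF N \<open>D \<subseteq> N\<close> M rest M_span] by blast
  show False
  proof (cases "\<gamma> f \<in> span G indep (\<gamma> ` N)")
    case False
    have "disjoint_family_on inc M3"
      using M3(1) unfolding indep_matching_iff by blast
    then have "\<forall>g\<in>M \<union> D. inc f \<inter> inc g = {}"
      using disjoint_family_onD[of inc M3 f] M3(2) \<open>f \<in> M3\<close> \<open>f \<notin> M\<close> P_D
      unfolding P_def by blast
    moreover have "f \<in> E"
      using \<open>P \<subseteq> E'\<close> \<open>E' \<subseteq> E\<close> unfolding P_def by blast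
    ultimately have "\<not> max_indep_matching E inc \<gamma> G indep N"
      using not_max_of_extendable_exchange[OF N \<open>D \<subseteq> N\<close> indep_matching_mono[OF \<open>E' \<subseteq> E\<close> M]
          _ M_span_N rest_span _ _ False] P_D unfolding P_def by blast
    then show False
      using N_max by blast
  next
    case True
    have "card D > 0"
      using card_edges_meeting_pos[OF N_max \<open>e \<in> E\<close> e_span] unfolding D_def .
    have "M \<subseteq> E"
      using M \<open>E' \<subseteq> E\<close> unfolding indep_matching_def by blast
    then have "card N < card P + card D"
      using card_M \<open>f \<notin> M\<close> \<open>card D > 0\<close> finite_subset[OF _ finite_edges] unfolding P_def by simp
    moreover have "\<gamma> ` P \<subseteq> span G indep (\<gamma> ` N)"
      using True M_span_N unfolding P_def by simp
    moreover have "\<gamma> ` (N - D) \<subseteq> span G indep (\<gamma> ` P)"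
      using rest_span span_mono[of "\<gamma> ` M" "\<gamma> ` P" G indep] unfolding P_def by blast
    ultimately obtain N' where "indep_matching E inc \<gamma> indep N'"
      "span G indep (\<gamma> ` N') = span G indep (\<gamma> ` N)" "card (edges_meeting inc N' e) < card D"
      by (rule fewer_edges_meeting_of_exchange[OF N \<open>D \<subseteq> N\<close> \<open>finite D\<close>
            indep_matching_mono[OF \<open>E' \<subseteq> E\<close> P] _ P_e P_D])
    then show False
      using minimal unfolding D_def by fastforce
  qed
qed

lemma max_indep_matching_outside_star:
  fixes e :: 'e
  assumes "max_indep_matching E inc \<gamma> G indep N" and "e \<in> E"
    and "\<gamma> e \<notin> span G indep (\<gamma> ` N)"
    and "\<And>N'. indep_matching E inc \<gamma> indep N' \<Longrightarrow>
      span G indep (\<gamma> ` N') = span G indep (\<gamma> ` N) \<Longrightarrow>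
      card (edges_meeting inc N e) \<le> card (edges_meeting inc N' e)"
  shows "max_indep_matching (hdel_edges E inc (Vof inc (insert e (edges_meeting inc N e))))
    inc \<gamma> G indep (N - edges_meeting inc N e)"
proof -
  have "indep_matching E inc \<gamma> indep N"
    using assms(1) unfolding max_indep_matching_def by blast
  then show ?thesis
    using indep_matching_outside_star[of N e] incl_max_outside_star[OF assms]
    unfolding max_indep_matching_def by blast
qed

end

theorem lemma1:
  fixes V :: "'v set" and E :: "'e set" and inc :: "'e \<Rightarrow> 'v set"
    and G :: "'m set" and indep :: "'m set \<Rightarrow> bool" and \<gamma> :: "'e \<Rightarrow> 'm"
    and M :: "'e set" and l :: nat and e :: 'e
  assumes "multi_hypergraph V E inc"
    and "matroid G indep"
    and "\<forall>f\<in>E. \<gamma> f \<in> G"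
    and "max_indep_matching E inc \<gamma> G indep M"
    and "card M = l"
    and "e \<in> E"
    and "\<gamma> e \<notin> span G indep (\<gamma> ` M)"
  shows "\<exists>k::nat. k > 0 \<and> (\<exists>X. X \<subseteq> E \<and> card X = k + 1 \<and> hconnected (Vof inc X) X inc \<and>
           (\<exists>M'. max_indep_matching (hdel_edges E inc (Vof inc X)) inc \<gamma> G indep M' \<and>
                 int (card M') = int l - int k))"
proof -
  interpret matroid_labelled_hypergraph G indep V E inc \<gamma>
    using assms(1-3) by unfold_locales
  obtain N where N_max: "max_indep_matching E inc \<gamma> G indep N"
    and span_N: "span G indep (\<gamma> ` N) = span G indep (\<gamma> ` M)" and "card N = l"
    and minimal: "\<And>N'. indep_matching E inc \<gamma> indep N' \<Longrightarrow>
      span G indep (\<gamma> ` N') = span G indep (\<gamma> ` N) \<Longrightarrow>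
      card (edges_meeting inc N e) \<le> card (edges_meeting inc N' e)"
    using ex_min_edges_meeting[OF assms(4), of e] assms(5) by blast
  have e_span: "\<gamma> e \<notin> span G indep (\<gamma> ` N)"
    using span_N assms(7) by simp
  define D where "D = edges_meeting inc N e"
  have N: "indep_matching E inc \<gamma> indep N"
    using N_max unfolding max_indep_matching_def by blast
  then have "finite N" "e \<notin> N"
    using finite_subset[OF _ finite_edges] e_span subset_span[OF indep_subset_ground, of "\<gamma> ` N"]
    unfolding indep_matching_def by blast+
  moreover have "D \<subseteq> N"
    unfolding D_def edges_meeting_def by blast
  ultimately have "e \<notin> D"
    by blast
  show ?thesis
  proof (intro exI conjI)
    show "card D > 0"
      using card_edges_meeting_pos[OF N_max \<open>e \<in> E\<close> e_span] unfolding D_def .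
    show "insert e D \<subseteq> E"
      using \<open>e \<in> E\<close> \<open>D \<subseteq> N\<close> N unfolding indep_matching_def by blast
    show "card (insert e D) = card D + 1"
      using \<open>e \<notin> D\<close> finite_subset[OF \<open>D \<subseteq> N\<close> \<open>finite N\<close>] by simp
    show "hconnected (Vof inc (insert e D)) (insert e D) inc"
      by (rule hconnected_star) (simp add: D_def edges_meeting_def Int_commute)
    show "max_indep_matching (hdel_edges E inc (Vof inc (insert e D))) inc \<gamma> G indep (N - D)"
      unfolding D_def by (rule max_indep_matching_outside_star[OF N_max \<open>e \<in> E\<close> e_span minimal])
    show "int (card (N - D)) = int l - int (card D)"
      using card_Diff_subset[OF finite_subset[OF \<open>D \<subseteq> N\<close> \<open>finite N\<close>] \<open>D \<subseteq> N\<close>]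
        card_mono[OF \<open>finite N\<close> \<open>D \<subseteq> N\<close>] \<open>card N = l\<close> by simp
  qed
qed

end
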